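(* Let $\lambda,\alpha_1,\alpha_2\in\mathbb{C}^*$ and consider the tensor product $\mathcal{W}$-module $\Omega(\lambda,\alpha_1)\otimes\Omega(\lambda,\alpha_2)$ (both factors being $\mathbb{C}[Y]$). Let $U=\mathrm{span}\{\sum_{t=0}^{j}\binom{j}{t}Y^{j-t}\otimes Y^t\mid j\in\mathbb{N}\}$. Then $U$ is a nonzero proper $\mathcal{W}$-submodule of $\Omega(\lambda,\alpha_1)\otimes\Omega(\lambda,\alpha_2)$; consequently $\Omega(\lambda,\alpha_1)\otimes\Omega(\lambda,\alpha_2)$ is a reducible $\mathcal{W}$-module.
   Context: The Witt algebra $\mathcal{W}$ is the complex Lie algebra with basis $\{L_m\mid m\in\mathbb{Z}\}$ and bracket $[L_m,L_n]=(n-m)L_{m+n}$. For $\lambda\in\mathbb{C}^*$ and $\alpha\in\mathbb{C}$, $\Omega(\lambda,\alpha)$ denotes the $\mathcal{W}$-module $\mathbb{C}[Y]$ with $L_m f(Y)=\lambda^m(Y+m\alpha)f(Y-m)$ for $m\in\mathbb{Z}$. The tensor product has action $L_m(v\otimes w)=L_mv\otimes w+v\otimes L_mw$. $\mathbb{N}$ denotes non-negative integers. *)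

theory Defs
  imports "HOL-Computational_Algebra.Polynomial"
begin

definition omega_act :: "complex \<Rightarrow> complex \<Rightarrow> int \<Rightarrow> complex poly \<Rightarrow> complex poly" where
  "omega_act lam al m f =
     smult (lam powi m) ([:of_int m * al, 1:] * pcompose f [:- of_int m, 1:])"

text \<open>The tensor product C[Y] (x) C[Y] is modelled as complex poly poly:
  the inner polynomial variable is the first tensor factor, the outer one the second.\<close>
definition tens :: "complex poly \<Rightarrow> complex poly \<Rightarrow> complex poly poly" where
  "tens f g = map_poly (\<lambda>c. smult c f) g"

definition tsmult :: "complex \<Rightarrow> complex poly poly \<Rightarrow> complex poly poly" where
  "tsmult c F = smult [:c:] F"

text \<open>Action on the tensor product: the linear extension of
  L_m (v (x) w) = L_m v (x) w + v (x) L_m w, using F = sum_i (coeff F i) (x) Y^i.\<close>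
definition tensor_act ::
  "complex \<Rightarrow> complex \<Rightarrow> complex \<Rightarrow> int \<Rightarrow> complex poly poly \<Rightarrow> complex poly poly" where
  "tensor_act lam a1 a2 m F =
     (\<Sum>i\<le>degree F. tens (omega_act lam a1 m (coeff F i)) (monom 1 i)
                    + tens (coeff F i) (omega_act lam a2 m (monom 1 i)))"

definition is_submodule ::
  "complex \<Rightarrow> complex \<Rightarrow> complex \<Rightarrow> complex poly poly set \<Rightarrow> bool" where
  "is_submodule lam a1 a2 S \<longleftrightarrow>
     0 \<in> S \<and> (\<forall>x\<in>S. \<forall>y\<in>S. x + y \<in> S) \<and> (\<forall>c. \<forall>x\<in>S. tsmult c x \<in> S) \<and>
     (\<forall>m::int. \<forall>x\<in>S. tensor_act lam a1 a2 m x \<in> S)"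

definition is_reducible :: "complex \<Rightarrow> complex \<Rightarrow> complex \<Rightarrow> bool" where
  "is_reducible lam a1 a2 \<longleftrightarrow>
     (\<exists>S. is_submodule lam a1 a2 S \<and> S \<noteq> {0} \<and> S \<noteq> UNIV)"

definition ugen :: "nat \<Rightarrow> complex poly poly" where
  "ugen j = (\<Sum>t=0..j. tsmult (of_nat (j choose t)) (tens (monom 1 (j - t)) (monom 1 t)))"

definition Uspan :: "complex poly poly set" where
  "Uspan = {F. \<exists>n (c :: nat \<Rightarrow> complex). F = (\<Sum>j<n. tsmult (c j) (ugen j))}"

end

theory Submission
  imports Defs
begin

text \<open>Evaluating both tensor factors identifies \<open>\<complex>[Y] \<otimes> \<complex>[Y]\<close> with the polynomials
  in two variables \<open>X, Z\<close>. There \<open>L\<^sub>m\<close> acts by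
  \<open>\<lambda>\<^sup>m ((X + m\<alpha>\<^sub>1) F(X - m, Z) + (Z + m\<alpha>\<^sub>2) F(X, Z - m))\<close>, and the generators of \<open>U\<close> become
  \<open>(X + Z)\<^sup>j\<close>, so \<open>U\<close> consists of the polynomials in \<open>X + Z\<close>. This space is stable:
  \<open>L\<^sub>m\<close> maps \<open>p(X + Z)\<close> to \<open>\<lambda>\<^sup>m (X + Z + m(\<alpha>\<^sub>1 + \<alpha>\<^sub>2)) p(X + Z - m)\<close>. It contains \<open>1\<close> but
  not \<open>X\<close>, hence it is a nonzero proper submodule.\<close>

definition tensor_eval :: "complex poly poly \<Rightarrow> complex \<Rightarrow> complex \<Rightarrow> complex" where
  "tensor_eval F x z = (\<Sum>i\<le>degree F. poly (coeff F i) x * z ^ i)"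

lemma tensor_eval_altdef:
  assumes "degree F \<le> n"
  shows "tensor_eval F x z = (\<Sum>i\<le>n. poly (coeff F i) x * z ^ i)"
  unfolding tensor_eval_def
  by (intro sum.mono_neutral_left) (use assms in \<open>auto simp: coeff_eq_0 not_le\<close>)

lemma tensor_eval_0 [simp]: "tensor_eval 0 x z = 0"
  by (simp add: tensor_eval_def)

lemma tensor_eval_add: "tensor_eval (F + G) x z = tensor_eval F x z + tensor_eval G x z"
proof -
  let ?n = "max (degree F) (degree G)"
  have "degree (F + G) \<le> ?n"
    by (rule degree_add_le) auto
  then have "tensor_eval (F + G) x z = (\<Sum>i\<le>?n. poly (coeff (F + G) i) x * z ^ i)"
    by (rule tensor_eval_altdef)
  also have "\<dots> = (\<Sum>i\<le>?n. poly (coeff F i) x * z ^ i) + (\<Sum>i\<le>?n. poly (coeff G i) x * z ^ i)"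
    by (simp add: sum.distrib distrib_right)
  also have "\<dots> = tensor_eval F x z + tensor_eval G x z"
    using tensor_eval_altdef[of F ?n x z] tensor_eval_altdef[of G ?n x z] by simp
  finally show ?thesis .
qed

lemma tensor_eval_uminus: "tensor_eval (- F) x z = - tensor_eval F x z"
  by (simp add: tensor_eval_def sum_negf)

lemma tensor_eval_diff: "tensor_eval (F - G) x z = tensor_eval F x z - tensor_eval G x z"
  using tensor_eval_add[of F "- G"] by (simp add: tensor_eval_uminus)

lemma tensor_eval_sum: "tensor_eval (\<Sum>k\<in>A. f k) x z = (\<Sum>k\<in>A. tensor_eval (f k) x z)"
  by (induction A rule: infinite_finite_induct) (auto simp: tensor_eval_add)

lemma tensor_eval_tsmult: "tensor_eval (tsmult c F) x z = c * tensor_eval F x z"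
proof -
  have "degree (tsmult c F) \<le> degree F"
    unfolding tsmult_def by (rule degree_smult_le)
  then have "tensor_eval (tsmult c F) x z = (\<Sum>i\<le>degree F. poly (coeff (tsmult c F) i) x * z ^ i)"
    by (rule tensor_eval_altdef)
  then show ?thesis
    by (simp add: tsmult_def tensor_eval_def sum_distrib_left mult.assoc)
qed

lemma coeff_tens: "coeff (tens f g) i = smult (coeff g i) f"
  unfolding tens_def by (simp add: coeff_map_poly)

lemma tensor_eval_tens: "tensor_eval (tens f g) x z = poly f x * poly g z"
proof -
  have "degree (tens f g) \<le> degree g"
    by (rule degree_le) (simp add: coeff_tens coeff_eq_0)
  then have "tensor_eval (tens f g) x z = (\<Sum>i\<le>degree g. poly (coeff (tens f g) i) x * z ^ i)"
    by (rule tensor_eval_altdef)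
  then show ?thesis
    by (simp add: coeff_tens poly_altdef[of g] sum_distrib_left mult_ac)
qed

lemma tensor_eval_eq_0_imp:
  assumes "\<And>x z. tensor_eval H x z = 0"
  shows "H = 0"
proof (rule poly_eqI)
  fix i
  have "poly (coeff H i) x = 0" for x
  proof -
    have "\<forall>z. (\<Sum>j\<le>degree H. poly (coeff H j) x * z ^ j) = 0"
      using assms by (simp add: tensor_eval_def)
    then have "\<forall>j\<le>degree H. poly (coeff H j) x = 0"
      by (subst (asm) polyfun_eq_0)
    then show ?thesis
      by (cases "i \<le> degree H") (auto simp: coeff_eq_0)
  qed
  then show "coeff H i = coeff 0 i"
    using poly_all_0_iff_0 by auto
qed

lemma tensor_eval_eqI:
  assumes "\<And>x z. tensor_eval F x z = tensor_eval G x z"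
  shows "F = G"
  using tensor_eval_eq_0_imp[of "F - G"] assms by (simp add: tensor_eval_diff)

lemma poly_omega_act:
  "poly (omega_act lam al m f) x = lam powi m * ((of_int m * al + x) * poly f (x - of_int m))"
  by (simp add: omega_act_def poly_pcompose distrib_right)

lemma tensor_eval_tensor_act:
  "tensor_eval (tensor_act lam a1 a2 m F) x z =
     lam powi m * ((x + of_int m * a1) * tensor_eval F (x - of_int m) z
                   + (z + of_int m * a2) * tensor_eval F x (z - of_int m))"
proof -
  let ?c = "coeff F"
  have "tensor_eval (tensor_act lam a1 a2 m F) x z =
    (\<Sum>i\<le>degree F. lam powi m * ((x + of_int m * a1) * (poly (?c i) (x - of_int m) * z ^ i))
       + lam powi m * ((z + of_int m * a2) * (poly (?c i) x * (z - of_int m) ^ i)))"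
    unfolding tensor_act_def tensor_eval_sum tensor_eval_add tensor_eval_tens poly_omega_act
      poly_monom
    by (rule sum.cong) (simp_all add: algebra_simps)
  also have "\<dots> = lam powi m * ((x + of_int m * a1) * tensor_eval F (x - of_int m) z
                   + (z + of_int m * a2) * tensor_eval F x (z - of_int m))"
    unfolding tensor_eval_def sum.distrib distrib_left sum_distrib_left ..
  finally show ?thesis .
qed

lemma tensor_eval_ugen: "tensor_eval (ugen j) x z = (x + z) ^ j"
proof -
  have "tensor_eval (ugen j) x z = (\<Sum>t=0..j. of_nat (j choose t) * (x ^ (j - t) * z ^ t))"
    unfolding ugen_def tensor_eval_sum tensor_eval_tsmult tensor_eval_tens poly_monom by simp
  also have "\<dots> = (z + x) ^ j"
    by (simp add: binomial_ring atLeast0AtMost mult_ac)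
  finally show ?thesis
    by (simp add: add.commute)
qed

definition polys_in_sum :: "complex poly poly set" where
  "polys_in_sum = {F. \<exists>p. \<forall>x z. tensor_eval F x z = poly p (x + z)}"

lemma Uspan_eq_polys_in_sum: "Uspan = polys_in_sum"
proof
  show "Uspan \<subseteq> polys_in_sum"
  proof
    fix F
    assume "F \<in> Uspan"
    then obtain n c where F: "F = (\<Sum>j<n. tsmult (c j) (ugen j))"
      unfolding Uspan_def by blast
    have "tensor_eval F x z = poly (\<Sum>j<n. monom (c j) j) (x + z)" for x z
      by (simp add: F tensor_eval_sum tensor_eval_tsmult tensor_eval_ugen poly_sum poly_monom)
    then show "F \<in> polys_in_sum"
      unfolding polys_in_sum_def by blast
  qed
next
  show "polys_in_sum \<subseteq> Uspan"
  proof
    fix F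
    assume "F \<in> polys_in_sum"
    then obtain p where p: "\<And>x z. tensor_eval F x z = poly p (x + z)"
      unfolding polys_in_sum_def by blast
    define G where "G = (\<Sum>j<Suc (degree p). tsmult (coeff p j) (ugen j))"
    have "tensor_eval G x z = poly p (x + z)" for x z
      by (simp add: G_def tensor_eval_sum tensor_eval_tsmult tensor_eval_ugen
          poly_altdef[of p] lessThan_Suc_atMost)
    then have "F = G"
      using p by (intro tensor_eval_eqI) simp
    then show "F \<in> Uspan"
      unfolding Uspan_def G_def by blast
  qed
qed

lemma is_submodule_polys_in_sum: "is_submodule lam a1 a2 polys_in_sum"
  unfolding is_submodule_def
proof (intro conjI ballI allI)
  show "0 \<in> polys_in_sum"
    unfolding polys_in_sum_def by (auto intro: exI[of _ 0])
next
  fix F G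
  assume "F \<in> polys_in_sum" "G \<in> polys_in_sum"
  then obtain p q where "\<And>x z. tensor_eval F x z = poly p (x + z)"
    and "\<And>x z. tensor_eval G x z = poly q (x + z)"
    unfolding polys_in_sum_def by blast
  then have "\<forall>x z. tensor_eval (F + G) x z = poly (p + q) (x + z)"
    by (simp add: tensor_eval_add)
  then show "F + G \<in> polys_in_sum"
    unfolding polys_in_sum_def by blast
next
  fix c F
  assume "F \<in> polys_in_sum"
  then obtain p where "\<And>x z. tensor_eval F x z = poly p (x + z)"
    unfolding polys_in_sum_def by blast
  then have "\<forall>x z. tensor_eval (tsmult c F) x z = poly (smult c p) (x + z)"
    by (simp add: tensor_eval_tsmult)
  then show "tsmult c F \<in> polys_in_sum"
    unfolding polys_in_sum_def by blast
next
  fix m :: int and F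
  assume "F \<in> polys_in_sum"
  then obtain p where p: "\<And>x z. tensor_eval F x z = poly p (x + z)"
    unfolding polys_in_sum_def by blast
  define q where
    "q = smult (lam powi m) ([:of_int m * (a1 + a2), 1:] * pcompose p [:- of_int m, 1:])"
  have "\<forall>x z. tensor_eval (tensor_act lam a1 a2 m F) x z = poly q (x + z)"
    by (simp add: tensor_eval_tensor_act p q_def poly_pcompose algebra_simps)
  then show "tensor_act lam a1 a2 m F \<in> polys_in_sum"
    unfolding polys_in_sum_def by blast
qed

lemma polys_in_sum_ne_zero: "polys_in_sum \<noteq> {0}"
proof
  assume "polys_in_sum = {0}"
  moreover have "ugen 0 \<in> polys_in_sum"
    unfolding polys_in_sum_def by (auto simp: tensor_eval_ugen intro: exI[of _ 1])
  ultimately have "tensor_eval (ugen 0) 0 0 = 0"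
    by (metis singletonD tensor_eval_0)
  then show False
    by (simp add: tensor_eval_ugen)
qed

lemma tens_X_1_notin_polys_in_sum: "tens [:0, 1:] 1 \<notin> polys_in_sum"
proof
  assume "tens [:0, 1:] 1 \<in> polys_in_sum"
  then obtain p where "\<And>x z. tensor_eval (tens [:0, 1:] 1) x z = poly p (x + z)"
    unfolding polys_in_sum_def by blast
  then have "\<And>x z. x = poly p (x + z)"
    by (simp add: tensor_eval_tens)
  from this[of 0 0] this[of 1 "-1"] show False
    by simp
qed

theorem mainTheorem14:
  fixes lam a1 a2 :: complex
  assumes "lam \<noteq> 0" and "a1 \<noteq> 0" and "a2 \<noteq> 0"
  shows "is_submodule lam a1 a2 Uspan \<and> Uspan \<noteq> {0} \<and> Uspan \<noteq> UNIV
         \<and> is_reducible lam a1 a2"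
  using is_submodule_polys_in_sum polys_in_sum_ne_zero tens_X_1_notin_polys_in_sum
  unfolding Uspan_eq_polys_in_sum is_reducible_def by blast

end
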